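(* Let $K\subseteq\mathbb{R}^d$ be a convex body containing the origin, let $\Lambda\subseteq\mathbb{R}^d$ be a lattice, let $V\subseteq\mathbb{R}^d$ be a rational linear subspace with $\dim V=\ell$, and let $i\in\{1,\dots,d\}$. Let $\pi_V$ denote the orthogonal projection of $\mathbb{R}^d$ onto $V$ and $V^\perp$ the orthogonal complement of $V$. Then $$\mu_i(K,\Lambda)\leqslant \max_{\substack{0\le j\le \ell\\ 0\le i-j\le d-\ell}} \Big(\mu_j(\pi_V(K),\pi_V(\Lambda))+\mu_{i-j}(K\cap V^\perp,\Lambda\cap V^\perp)\Big).$$
   Context: A convex body is a full-dimensional compact convex set; a lattice is a full-rank discrete subgroup. A linear subspace $V$ is rational (with respect to $\Lambda$) if it is spanned by vectors of $\Lambda$; then $\pi_V(\Lambda)$ is a lattice in $V$ and $\Lambda\cap V^\perp$ is a lattice in $V^\perp$. For a $k$-dimensional real vector space $W$, a lattice $\Gamma\subseteq W$, a compact convex set $C\subseteq W$ and $i\in\{1,\dots,k\}$, the $i$-th covering minimum is $\mu_i(C,\Gamma)=\min\{\mu\ge 0: (\mu C+\Gamma)\cap U\neq\emptyset \text{ for every affine subspace } U\subseteq W \text{ of dimension } k-i\}$; by convention $\mu_0(C,\Gamma)=0$. The covering minima of $\pi_V(K)$ and $\pi_V(\Lambda)$ are taken inside $V$, and those of $K\cap V^\perp$ and $\Lambda\cap V^\perp$ inside $V^\perp$. *)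

theory Defs
  imports "HOL-Analysis.Analysis" "HOL-Library.Extended_Real"
begin

definition convex_body :: "'a::euclidean_space set \<Rightarrow> bool" where
  "convex_body K \<longleftrightarrow> compact K \<and> convex K \<and> interior K \<noteq> {}"

definition lattice_in :: "'a::euclidean_space set \<Rightarrow> 'a set \<Rightarrow> bool" where
  "lattice_in W L \<longleftrightarrow> L \<subseteq> W \<and> 0 \<in> L \<and> (\<forall>x\<in>L. \<forall>y\<in>L. x - y \<in> L)
     \<and> (\<exists>e>0. \<forall>x\<in>L. x \<noteq> 0 \<longrightarrow> e \<le> norm x) \<and> span L = W"

definition lattice :: "'a::euclidean_space set \<Rightarrow> bool" where
  "lattice L \<longleftrightarrow> lattice_in UNIV L"

definition rational_subspace :: "'a::euclidean_space set \<Rightarrow> 'a set \<Rightarrow> bool" where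
  "rational_subspace L V \<longleftrightarrow> subspace V \<and> (\<exists>S\<subseteq>L. span S = V)"

definition orth_proj :: "'a::euclidean_space set \<Rightarrow> 'a \<Rightarrow> 'a" where
  "orth_proj V x = (THE y. y \<in> V \<and> (\<forall>v\<in>V. inner (x - y) v = 0))"

text \<open>Value in extended reals; the infimum of
  the empty set is \<infinity>.\<close>
definition covering_minimum :: "'a::euclidean_space set \<Rightarrow> 'a set \<Rightarrow> 'a set \<Rightarrow> nat \<Rightarrow> ereal" where
  "covering_minimum W C \<Gamma> i =
     (if i = 0 then 0 else
      Inf {ereal \<mu> | \<mu>. \<mu> \<ge> 0 \<and>
            (\<forall>U. affine U \<and> U \<noteq> {} \<and> U \<subseteq> W \<and> aff_dim U = int (dim W) - int i \<longrightarrow>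
                 {\<mu> *\<^sub>R c + g | c g. c \<in> C \<and> g \<in> \<Gamma>} \<inter> U \<noteq> {})})"

end

theory Submission
  imports Defs
begin

text \<open>Let \<open>U\<close> be a flat of codimension \<open>i\<close> and \<open>P\<close> the orthogonal projection onto \<open>V\<close>. By
  rank--nullity, \<open>P(U)\<close> has some codimension \<open>j\<close> in \<open>V\<close> and every fibre of \<open>U\<close> over \<open>P(U)\<close>, a flat
  parallel to \<open>V\<^sup>\<bottom>\<close>, has codimension \<open>i - j\<close> in \<open>V\<^sup>\<bottom>\<close>. A point of \<open>\<alpha> P(K) + P(\<Lambda>)\<close> in \<open>P(U)\<close>
  lifts to some \<open>z \<in> \<alpha> K + \<Lambda>\<close>; the fibre through \<open>z\<close>, translated by \<open>-z\<close>, is met by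
  \<open>\<beta> (K \<inter> V\<^sup>\<bottom>) + (\<Lambda> \<inter> V\<^sup>\<bottom>)\<close>, and since \<open>K\<close> is convex with \<open>0 \<in> K\<close>, \<open>\<alpha> K + \<beta> K \<subseteq> (\<alpha> + \<beta>) K\<close>.
  Hence \<open>(\<alpha> + \<beta>) K + \<Lambda>\<close> meets \<open>U\<close>.\<close>

lemma orth_proj_eqI:
  assumes "subspace V" "y \<in> V" "x - y \<in> orthogonal_comp V"
  shows "orth_proj V x = y"
  unfolding orth_proj_def
proof (rule the_equality)
  show "y \<in> V \<and> (\<forall>v\<in>V. inner (x - y) v = 0)"
    using assms(2,3) by (auto simp: orthogonal_comp_def orthogonal_def inner_commute)
next
  fix y' assume y': "y' \<in> V \<and> (\<forall>v\<in>V. inner (x - y') v = 0)"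
  have "y - y' \<in> V"
    using assms(1,2) y' by (simp add: subspace_diff)
  then have "inner (x - y') (y - y') = 0" "inner (x - y) (y - y') = 0"
    using y' assms(3) by (auto simp: orthogonal_comp_def orthogonal_def inner_commute)
  then have "inner ((x - y') - (x - y)) (y - y') = 0"
    by (simp add: inner_diff_left)
  then show "y' = y" by simp
qed

lemma
  assumes "subspace V"
  shows orth_proj_in: "orth_proj V x \<in> V"
    and diff_orth_proj_in_orthogonal_comp: "x - orth_proj V x \<in> orthogonal_comp V"
proof -
  obtain v w where "v \<in> V" "w \<in> orthogonal_comp V" "x = v + w"
    using subspace_sum_orthogonal_comp[OF assms] set_plus_elim by blast
  then have "orth_proj V x = v"
    using orth_proj_eqI[OF assms] by simp
  with \<open>v \<in> V\<close> \<open>w \<in> orthogonal_comp V\<close> \<open>x = v + w\<close>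
  show "orth_proj V x \<in> V" "x - orth_proj V x \<in> orthogonal_comp V" by simp_all
qed

lemma linear_orth_proj:
  assumes V: "subspace V"
  shows "linear (orth_proj V)"
proof (rule linearI)
  note proj = orth_proj_in[OF V] diff_orth_proj_in_orthogonal_comp[OF V]
  have V': "subspace (orthogonal_comp V)" by (rule subspace_orthogonal_comp)
  fix x y :: 'a and c :: real
  have "(x - orth_proj V x) + (y - orth_proj V y) \<in> orthogonal_comp V"
    using proj V' by (simp add: subspace_add)
  then show "orth_proj V (x + y) = orth_proj V x + orth_proj V y"
    using proj V by (intro orth_proj_eqI) (simp_all add: subspace_add algebra_simps)
  have "c *\<^sub>R (x - orth_proj V x) \<in> orthogonal_comp V"
    using proj V' by (simp add: subspace_scale)
  then show "orth_proj V (c *\<^sub>R x) = c *\<^sub>R orth_proj V x"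
    using proj V by (intro orth_proj_eqI) (simp_all add: subspace_scale algebra_simps)
qed

lemma orth_proj_eq_0_iff:
  assumes "subspace V"
  shows "orth_proj V x = 0 \<longleftrightarrow> x \<in> orthogonal_comp V"
  using diff_orth_proj_in_orthogonal_comp[OF assms, of x] orth_proj_eqI[OF assms, of 0 x]
  by (auto simp: assms subspace_0)

lemma dim_add_dim_orthogonal_comp:
  fixes V :: "'a::euclidean_space set"
  assumes "subspace V"
  shows "dim V + dim (orthogonal_comp V) = DIM('a)"
  using dim_subspace_orthogonal_to_vectors[OF assms subspace_UNIV]
  by (simp add: orthogonal_comp_def)

text \<open>Rank--nullity for a linear map restricted to a subspace \<open>L\<close>: the map is injective on the
  orthogonal complement of its kernel inside \<open>L\<close>, and that complement has the same image as \<open>L\<close>.\<close>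
lemma dim_image_add_dim_kernel:
  fixes f :: "'a::euclidean_space \<Rightarrow> 'b::euclidean_space"
  assumes f: "linear f" and L: "subspace L"
  shows "dim (f ` L) + dim (L \<inter> f -` {0}) = dim L"
proof -
  define N where "N = L \<inter> f -` {0}"
  define M where "M = L \<inter> orthogonal_comp N"
  have N: "subspace N"
    unfolding N_def using L f by (simp add: subspace_inter linear_subspace_vimage[OF f] subspace_single_0)
  have M: "subspace M"
    unfolding M_def by (simp add: L subspace_inter subspace_orthogonal_comp)
  have "M = {y \<in> L. \<forall>x\<in>N. orthogonal x y}"
    by (auto simp: M_def orthogonal_comp_def)
  then have "dim M + dim N = dim L"
    using dim_subspace_orthogonal_to_vectors[OF N L] by (simp add: N_def)
  moreover have "f ` M = f ` L"
  proof
    show "f ` L \<subseteq> f ` M"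
    proof
      fix y assume "y \<in> f ` L"
      then obtain x where x: "x \<in> L" "y = f x" by auto
      obtain n m where nm: "n \<in> span N" "\<And>w. w \<in> span N \<Longrightarrow> orthogonal m w" "x = n + m"
        using orthogonal_subspace_decomp_exists[of N x] by blast
      have "n \<in> N" using nm(1) N span_eq_iff by blast
      have "m = x - n" using nm(3) by simp
      then have "m \<in> L"
        using x(1) \<open>n \<in> N\<close> L by (simp add: N_def subspace_diff)
      moreover have "m \<in> orthogonal_comp N"
        using nm(2) span_base by (auto simp: orthogonal_comp_def orthogonal_commute)
      ultimately have "m \<in> M" by (simp add: M_def)
      moreover have "f x = f m"
        using \<open>n \<in> N\<close> nm(3) f by (simp add: N_def linear_add)
      ultimately show "y \<in> f ` M" using x by auto
    qed
  qed (auto simp: M_def)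
  moreover have "inj_on f (span M)"
  proof -
    have "x = 0" if "x \<in> M" "f x = 0" for x
      using that orthogonal_self by (auto simp: M_def N_def orthogonal_comp_def)
    then show ?thesis
      using M span_eq_iff linear_inj_on_iff_eq_0[OF f M] by metis
  qed
  then have "dim (f ` M) = dim M"
    by (rule dim_image_eq[OF f])
  ultimately show ?thesis by (simp add: N_def)
qed

lemma affine_linear_image:
  fixes f :: "'a::euclidean_space \<Rightarrow> 'b::euclidean_space"
  assumes "linear f" "affine S"
  shows "affine (f ` S)"
  using affine_hull_linear_image[of f S] assms
  by (metis affine_affine_hull affine_hull_eq linear_conv_bounded_linear)

lemma aff_dim_orth_proj_image_add_section:
  fixes U V :: "'a::euclidean_space set"
  assumes V: "subspace V" and U: "affine U" "u \<in> U"
  shows "aff_dim (orth_proj V ` U) + aff_dim ((\<lambda>x. x - u) ` U \<inter> orthogonal_comp V) = aff_dim U"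
proof -
  let ?P = "orth_proj V"
  define L where "L = (\<lambda>x. x - u) ` U"
  have L: "subspace L"
    unfolding L_def by (rule affine_diffs_subspace_subtract[OF U])
  have P: "linear ?P"
    by (rule linear_orth_proj[OF V])
  have "aff_dim U = int (dim L)"
    unfolding L_def by (rule aff_dim_eq_dim_subtract) (simp add: U(2) hull_inc)
  moreover have "aff_dim (?P ` U) = int (dim (?P ` L))"
  proof -
    have "(\<lambda>y. y - ?P u) ` ?P ` U = ?P ` L"
      unfolding L_def image_image using P by (simp add: linear_diff)
    then show ?thesis
      using aff_dim_eq_dim_subtract[of "?P u" "?P ` U"] U(2) by (simp add: hull_inc)
  qed
  moreover have "aff_dim (L \<inter> orthogonal_comp V) = int (dim (L \<inter> orthogonal_comp V))"
    by (simp add: aff_dim_subspace L subspace_inter subspace_orthogonal_comp)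
  moreover have "L \<inter> ?P -` {0} = L \<inter> orthogonal_comp V"
    using orth_proj_eq_0_iff[OF V] by auto
  ultimately show ?thesis
    using dim_image_add_dim_kernel[OF P L] by (simp add: L_def flip: of_nat_add)
qed

lemma aff_dim_diffs_Int_subspace:
  fixes U S :: "'a::euclidean_space set"
  assumes S: "subspace S" and "a - b \<in> S"
  shows "aff_dim ((\<lambda>x. x - a) ` U \<inter> S) = aff_dim ((\<lambda>x. x - b) ` U \<inter> S)"
proof -
  have shift: "x - a \<in> S \<longleftrightarrow> x - b \<in> S" for x
    using subspace_diff[OF S _ \<open>a - b \<in> S\<close>] subspace_add[OF S _ \<open>a - b \<in> S\<close>]
    by (metis diff_add_cancel diff_diff_eq2)
  have "(\<lambda>x. x - b) ` U \<inter> S = (+) (a - b) ` ((\<lambda>x. x - a) ` U \<inter> S)"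
  proof (intro equalityI subsetI)
    fix y assume "y \<in> (\<lambda>x. x - b) ` U \<inter> S"
    then obtain x where "x \<in> U" "x - a \<in> S" "y = x - b"
      using shift by auto
    then show "y \<in> (+) (a - b) ` ((\<lambda>x. x - a) ` U \<inter> S)"
      by (intro image_eqI[of _ _ "x - a"]) auto
  next
    fix y assume "y \<in> (+) (a - b) ` ((\<lambda>x. x - a) ` U \<inter> S)"
    then obtain x where "x \<in> U" "x - a \<in> S" "y = x - b"
      by auto
    then show "y \<in> (\<lambda>x. x - b) ` U \<inter> S"
      using shift by auto
  qed
  then show ?thesis
    by (simp add: aff_dim_translation_eq)
qed

lemma codimension_split:
  fixes U V :: "'a::euclidean_space set"
  assumes V: "subspace V" and U: "affine U" "U \<noteq> {}" "aff_dim U = int DIM('a) - int i"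
  obtains j where "j \<le> dim V" "j \<le> i" "i - j \<le> DIM('a) - dim V"
    "aff_dim (orth_proj V ` U) = int (dim V) - int j"
    "\<And>u. u \<in> U \<Longrightarrow>
       aff_dim ((\<lambda>x. x - u) ` U \<inter> orthogonal_comp V) = int (dim (orthogonal_comp V)) - int (i - j)"
proof -
  let ?P = "orth_proj V" and ?V' = "orthogonal_comp V"
  obtain u where u: "u \<in> U"
    using U(2) by blast
  define r where "r = aff_dim (?P ` U)"
  define t where "t = aff_dim ((\<lambda>x. x - u) ` U \<inter> ?V')"
  have sections: "aff_dim ((\<lambda>x. x - u') ` U \<inter> ?V') = aff_dim U - r" if "u' \<in> U" for u'
    using aff_dim_orth_proj_image_add_section[OF V U(1) that] by (simp add: r_def)
  have "0 \<le> r"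
    unfolding r_def using U(2) by (metis aff_dim_negative_iff image_is_empty not_le)
  have "0 \<in> (\<lambda>x. x - u) ` U \<inter> ?V'"
    using u subspace_0[OF subspace_orthogonal_comp] by force
  then have "0 \<le> t"
    unfolding t_def by (metis aff_dim_negative_iff empty_iff not_le)
  have "r \<le> int (dim V)"
    using aff_dim_subset[of "?P ` U" V] orth_proj_in[OF V]
    by (auto simp: r_def aff_dim_subspace[OF V])
  have "t \<le> int (dim ?V')"
    using aff_dim_subset[of _ ?V'] by (simp add: t_def aff_dim_subspace subspace_orthogonal_comp)
  have "t = aff_dim U - r"
    using sections[OF u] by (simp add: t_def)
  moreover have "dim V + dim ?V' = DIM('a)"
    by (rule dim_add_dim_orthogonal_comp[OF V])
  moreover obtain j where j: "int j = int (dim V) - r"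
    using \<open>r \<le> int (dim V)\<close> by (metis nonneg_int_cases diff_ge_0_iff_ge)
  ultimately show thesis
    using that[of j] sections U(3) \<open>0 \<le> r\<close> \<open>0 \<le> t\<close> \<open>r \<le> int (dim V)\<close> \<open>t \<le> int (dim ?V')\<close>
    by (simp add: r_def)
qed

definition meets_all_flats :: "'a::euclidean_space set \<Rightarrow> 'a set \<Rightarrow> 'a set \<Rightarrow> nat \<Rightarrow> real \<Rightarrow> bool"
  where "meets_all_flats W C \<Gamma> i \<mu> \<longleftrightarrow>
    (\<forall>U. affine U \<and> U \<noteq> {} \<and> U \<subseteq> W \<and> aff_dim U = int (dim W) - int i \<longrightarrow>
       {\<mu> *\<^sub>R c + g | c g. c \<in> C \<and> g \<in> \<Gamma>} \<inter> U \<noteq> {})"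

lemma meets_all_flatsD:
  assumes "meets_all_flats W C \<Gamma> i \<mu>"
    and "affine U" "U \<noteq> {}" "U \<subseteq> W" "aff_dim U = int (dim W) - int i"
  obtains c g where "c \<in> C" "g \<in> \<Gamma>" "\<mu> *\<^sub>R c + g \<in> U"
  using assms unfolding meets_all_flats_def by blast

lemma covering_minimum_eq_Inf:
  assumes "i \<noteq> 0"
  shows "covering_minimum W C \<Gamma> i = Inf {ereal \<mu> | \<mu>. 0 \<le> \<mu> \<and> meets_all_flats W C \<Gamma> i \<mu>}"
  using assms by (simp add: covering_minimum_def meets_all_flats_def)

lemma covering_minimum_nonneg: "0 \<le> covering_minimum W C \<Gamma> i"
  unfolding covering_minimum_def by (auto intro: Inf_greatest)

lemma covering_minimum_le:
  assumes "i \<noteq> 0" "0 \<le> \<mu>" "meets_all_flats W C \<Gamma> i \<mu>"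
  shows "covering_minimum W C \<Gamma> i \<le> ereal \<mu>"
  unfolding covering_minimum_eq_Inf[OF assms(1)] using assms(2,3) by (auto intro: Inf_lower)

lemma scaleR_mem_convex:
  assumes "convex K" "0 \<in> K" "x \<in> K" "0 \<le> s" "s \<le> 1"
  shows "s *\<^sub>R x \<in> K"
  using convexD[OF assms(1,2,3), of "1 - s" s] assms(4,5) by simp

lemma scaleR_add_in_scaled_convex:
  assumes K: "convex K" "0 \<in> K" and xy: "x \<in> K" "y \<in> K"
    and "0 \<le> \<alpha>" "0 \<le> \<beta>" "\<alpha> + \<beta> \<le> \<mu>"
  obtains c where "c \<in> K" "\<alpha> *\<^sub>R x + \<beta> *\<^sub>R y = \<mu> *\<^sub>R c"
proof (cases "\<alpha> + \<beta> = 0")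
  case True
  with assms have "\<alpha> = 0" "\<beta> = 0" by linarith+
  with K(2) show thesis by (intro that[of 0]) simp_all
next
  case False
  then have pos: "0 < \<alpha> + \<beta>" "0 < \<mu>" using assms by linarith+
  define w where "w = (\<alpha> / (\<alpha> + \<beta>)) *\<^sub>R x + (\<beta> / (\<alpha> + \<beta>)) *\<^sub>R y"
  have "w \<in> K"
    unfolding w_def using assms pos by (intro convexD[OF K(1) xy]) (simp_all add: add_divide_distrib[symmetric])
  then have "((\<alpha> + \<beta>) / \<mu>) *\<^sub>R w \<in> K"
    using assms pos by (intro scaleR_mem_convex[OF K]) simp_all
  moreover have "\<alpha> *\<^sub>R x + \<beta> *\<^sub>R y = \<mu> *\<^sub>R (((\<alpha> + \<beta>) / \<mu>) *\<^sub>R w)"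
    using pos by (simp add: w_def scaleR_add_right)
  ultimately show thesis by (rule that)
qed

lemma meets_all_flats_codim_0:
  assumes "subspace W" "0 \<in> C" "0 \<in> \<Gamma>"
  shows "meets_all_flats W C \<Gamma> 0 \<mu>"
  unfolding meets_all_flats_def
proof (intro allI impI)
  fix U assume U: "affine U \<and> U \<noteq> {} \<and> U \<subseteq> W \<and> aff_dim U = int (dim W) - int 0"
  then have "affine hull U = affine hull W"
    using aff_dim_eq_full_gen[of U W] by (simp add: aff_dim_subspace[OF assms(1)])
  then have "U = W"
    using U assms(1) by (metis affine_hull_eq subspace_imp_affine)
  then show "{\<mu> *\<^sub>R c + g | c g. c \<in> C \<and> g \<in> \<Gamma>} \<inter> U \<noteq> {}"
    using assms by (force simp: subspace_0)
qed

lemma meets_all_flats_if_covering_minimum_less: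
  assumes W: "subspace W" and C: "convex C" "0 \<in> C" and "0 \<in> \<Gamma>"
    and less: "covering_minimum W C \<Gamma> i < ereal \<mu>"
  shows "meets_all_flats W C \<Gamma> i \<mu>"
proof (cases "i = 0")
  case True
  with meets_all_flats_codim_0 assms show ?thesis by blast
next
  case False
  with less obtain m where m: "0 \<le> m" "m < \<mu>" "meets_all_flats W C \<Gamma> i m"
    by (auto simp: covering_minimum_eq_Inf Inf_less_iff)
  show ?thesis
    unfolding meets_all_flats_def
  proof (intro allI impI)
    fix U assume "affine U \<and> U \<noteq> {} \<and> U \<subseteq> W \<and> aff_dim U = int (dim W) - int i"
    then obtain c g where cg: "c \<in> C" "g \<in> \<Gamma>" "m *\<^sub>R c + g \<in> U"
      using meets_all_flatsD[OF m(3)] by blast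
    obtain c' where "c' \<in> C" "m *\<^sub>R c + 0 *\<^sub>R c = \<mu> *\<^sub>R c'"
      using scaleR_add_in_scaled_convex[OF C cg(1) cg(1), of m 0 \<mu>] m by auto
    with cg show "{\<mu> *\<^sub>R c + g | c g. c \<in> C \<and> g \<in> \<Gamma>} \<inter> U \<noteq> {}"
      by auto
  qed
qed

lemma hits_flat_via_projection_and_section:
  fixes K \<Lambda> V U :: "'a::euclidean_space set"
  assumes K: "convex K" "0 \<in> K" and \<Lambda>: "\<And>x y. x \<in> \<Lambda> \<Longrightarrow> y \<in> \<Lambda> \<Longrightarrow> x + y \<in> \<Lambda>"
    and V: "subspace V" and U: "affine U" "U \<noteq> {}"
    and proj_dim: "aff_dim (orth_proj V ` U) = int (dim V) - int j"
    and section_dim: "\<And>u. u \<in> U \<Longrightarrow>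
      aff_dim ((\<lambda>x. x - u) ` U \<inter> orthogonal_comp V) = int (dim (orthogonal_comp V)) - int k"
    and proj_meets: "meets_all_flats V (orth_proj V ` K) (orth_proj V ` \<Lambda>) j \<alpha>"
    and section_meets: "meets_all_flats (orthogonal_comp V) (K \<inter> orthogonal_comp V)
      (\<Lambda> \<inter> orthogonal_comp V) k \<beta>"
    and nonneg: "0 \<le> \<alpha>" "0 \<le> \<beta>"
  obtains c g where "c \<in> K" "g \<in> \<Lambda>" "(\<alpha> + \<beta>) *\<^sub>R c + g \<in> U"
proof -
  let ?P = "orth_proj V" and ?V' = "orthogonal_comp V"
  have P: "linear ?P"
    by (rule linear_orth_proj[OF V])
  have "affine (?P ` U)" "?P ` U \<subseteq> V"
    using affine_linear_image[OF P U(1)] orth_proj_in[OF V] by auto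
  then obtain c' g' where "c' \<in> ?P ` K" "g' \<in> ?P ` \<Lambda>" "\<alpha> *\<^sub>R c' + g' \<in> ?P ` U"
    using meets_all_flatsD[OF proj_meets _ _ _ proj_dim] U(2) by blast
  then obtain c1 g1 u1 where c1: "c1 \<in> K" "g1 \<in> \<Lambda>" "u1 \<in> U" "\<alpha> *\<^sub>R ?P c1 + ?P g1 = ?P u1"
    by auto
  define z where "z = \<alpha> *\<^sub>R c1 + g1"
  have "?P (u1 - z) = 0"
    using c1(4) P by (simp add: z_def linear_diff linear_add linear_scale)
  then have "u1 - z \<in> ?V'"
    using orth_proj_eq_0_iff[OF V] by blast
  define F where "F = (\<lambda>x. x - z) ` U \<inter> ?V'"
  have "affine F"
  proof -
    have "(\<lambda>x. x - z) ` U = (+) (- z) ` U" by auto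
    then show ?thesis
      unfolding F_def using U(1) affine_translation subspace_imp_affine[OF subspace_orthogonal_comp]
      by (metis affine_Int)
  qed
  moreover have "u1 - z \<in> F"
    using c1(3) \<open>u1 - z \<in> ?V'\<close> by (simp add: F_def)
  moreover have "aff_dim F = int (dim ?V') - int k"
    using aff_dim_diffs_Int_subspace[OF subspace_orthogonal_comp \<open>u1 - z \<in> ?V'\<close>, of U] section_dim[OF c1(3)]
    by (simp add: F_def)
  moreover have "F \<subseteq> ?V'"
    by (simp add: F_def)
  ultimately obtain c2 g2 where c2: "c2 \<in> K \<inter> ?V'" "g2 \<in> \<Lambda> \<inter> ?V'" "\<beta> *\<^sub>R c2 + g2 \<in> F"
    using meets_all_flatsD[OF section_meets, of F] by blast
  obtain c where "c \<in> K" "\<alpha> *\<^sub>R c1 + \<beta> *\<^sub>R c2 = (\<alpha> + \<beta>) *\<^sub>R c"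
    using scaleR_add_in_scaled_convex[OF K c1(1) _ nonneg order_refl] c2(1) by blast
  moreover have "z + (\<beta> *\<^sub>R c2 + g2) \<in> U"
    using c2(3) by (auto simp: F_def)
  ultimately have "(\<alpha> + \<beta>) *\<^sub>R c + (g1 + g2) \<in> U"
    by (simp add: z_def algebra_simps)
  then show thesis
    using that \<open>c \<in> K\<close> \<Lambda>[OF c1(2)] c2(2) by blast
qed

lemma meets_all_flats_if_covering_minima_sum_less:
  fixes K \<Lambda> V :: "'a::euclidean_space set"
  assumes K: "convex K" "0 \<in> K" and \<Lambda>: "0 \<in> \<Lambda>" "\<And>x y. x \<in> \<Lambda> \<Longrightarrow> y \<in> \<Lambda> \<Longrightarrow> x + y \<in> \<Lambda>"
    and V: "subspace V"
    and less: "\<And>j. j \<le> dim V \<Longrightarrow> j \<le> i \<Longrightarrow> i - j \<le> DIM('a) - dim V \<Longrightarrow>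
      covering_minimum V (orth_proj V ` K) (orth_proj V ` \<Lambda>) j
      + covering_minimum (orthogonal_comp V) (K \<inter> orthogonal_comp V) (\<Lambda> \<inter> orthogonal_comp V) (i - j)
      < ereal \<mu>"
  shows "meets_all_flats UNIV K \<Lambda> i \<mu>"
  unfolding meets_all_flats_def
proof (intro allI impI)
  let ?P = "orth_proj V" and ?V' = "orthogonal_comp V"
  fix U :: "'a set" assume "affine U \<and> U \<noteq> {} \<and> U \<subseteq> UNIV \<and> aff_dim U = int (dim (UNIV :: 'a set)) - int i"
  moreover have "dim (UNIV :: 'a set) = DIM('a)"
    using aff_dim_subspace[OF subspace_UNIV] by simp
  ultimately have U: "affine U" "U \<noteq> {}" "aff_dim U = int DIM('a) - int i"
    by auto
  obtain j where j: "j \<le> dim V" "j \<le> i" "i - j \<le> DIM('a) - dim V"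
    and dims: "aff_dim (?P ` U) = int (dim V) - int j"
      "\<And>u. u \<in> U \<Longrightarrow> aff_dim ((\<lambda>x. x - u) ` U \<inter> ?V') = int (dim ?V') - int (i - j)"
    using codimension_split[OF V U] by blast
  define a where "a = covering_minimum V (?P ` K) (?P ` \<Lambda>) j"
  define b where "b = covering_minimum ?V' (K \<inter> ?V') (\<Lambda> \<inter> ?V') (i - j)"
  have "0 \<le> a" "0 \<le> b" "a + b < ereal \<mu>"
    using less[OF j] by (simp_all add: a_def b_def covering_minimum_nonneg)
  then obtain a' b' where ab: "a = ereal a'" "b = ereal b'" "a' + b' < \<mu>" "0 \<le> a'" "0 \<le> b'"
    by (cases a; cases b) auto
  define \<alpha> where "\<alpha> = a' + (\<mu> - a' - b') / 2"
  define \<beta> where "\<beta> = b' + (\<mu> - a' - b') / 2"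
  have "0 \<in> ?P ` K" "0 \<in> ?P ` \<Lambda>"
    using K(2) \<Lambda>(1) linear_0[OF linear_orth_proj[OF V]] by (metis image_eqI)+
  then have "meets_all_flats V (?P ` K) (?P ` \<Lambda>) j \<alpha>"
    using ab V convex_linear_image[OF linear_orth_proj[OF V] K(1)]
    by (intro meets_all_flats_if_covering_minimum_less) (auto simp: a_def \<alpha>_def)
  moreover have "meets_all_flats ?V' (K \<inter> ?V') (\<Lambda> \<inter> ?V') (i - j) \<beta>"
    using ab K \<Lambda>(1) subspace_orthogonal_comp[of V]
    by (intro meets_all_flats_if_covering_minimum_less)
      (auto simp: b_def \<beta>_def convex_Int subspace_imp_convex subspace_0)
  moreover have "0 \<le> \<alpha>" "0 \<le> \<beta>"
    using ab by (simp_all add: \<alpha>_def \<beta>_def)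
  ultimately obtain c g where "c \<in> K" "g \<in> \<Lambda>" "(\<alpha> + \<beta>) *\<^sub>R c + g \<in> U"
    using hits_flat_via_projection_and_section[OF K \<Lambda>(2) V U(1,2) dims] by blast
  moreover have "\<alpha> + \<beta> = \<mu>"
    by (simp add: \<alpha>_def \<beta>_def)
  ultimately show "{\<mu> *\<^sub>R c + g | c g. c \<in> K \<and> g \<in> \<Lambda>} \<inter> U \<noteq> {}"
    by auto
qed

lemma lattice_zero: "lattice \<Lambda> \<Longrightarrow> 0 \<in> \<Lambda>"
  by (simp add: lattice_def lattice_in_def)

lemma lattice_add:
  assumes "lattice \<Lambda>" "x \<in> \<Lambda>" "y \<in> \<Lambda>"
  shows "x + y \<in> \<Lambda>"
proof -
  have "\<And>x y. x \<in> \<Lambda> \<Longrightarrow> y \<in> \<Lambda> \<Longrightarrow> x - y \<in> \<Lambda>"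
    using assms(1) by (simp add: lattice_def lattice_in_def)
  then have "x - (0 - y) \<in> \<Lambda>"
    using assms lattice_zero by blast
  then show ?thesis by simp
qed

theorem theorem1p1:
  fixes K \<Lambda> V :: "'a::euclidean_space set" and i l :: nat
  assumes "convex_body K" and "0 \<in> K"
    and "lattice \<Lambda>"
    and "rational_subspace \<Lambda> V" and "dim V = l"
    and "1 \<le> i" and "i \<le> DIM('a)"
  shows "covering_minimum UNIV K \<Lambda> i \<le>
    Max ((\<lambda>j. covering_minimum V (orth_proj V ` K) (orth_proj V ` \<Lambda>) j
              + covering_minimum (orthogonal_comp V) (K \<inter> orthogonal_comp V)
                  (\<Lambda> \<inter> orthogonal_comp V) (i - j))
         ` {j. j \<le> l \<and> j \<le> i \<and> i - j \<le> DIM('a) - l})"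
    (is "_ \<le> Max (?f ` ?J)")
proof (rule ereal_le_epsilon2)
  fix e :: real assume "0 < e"
  have K: "convex K" using assms(1) by (simp add: convex_body_def)
  have V: "subspace V" using assms(4) by (simp add: rational_subspace_def)
  have "finite ?J" "min i l \<in> ?J"
    using assms(7) by (auto intro: finite_subset[of _ "{..l}"])
  then have bound: "?f j \<le> Max (?f ` ?J)" if "j \<in> ?J" for j
    using that by simp
  have "0 \<le> Max (?f ` ?J)"
    using bound[OF \<open>min i l \<in> ?J\<close>] by (rule order_trans[rotated]) (simp add: covering_minimum_nonneg)
  show "covering_minimum UNIV K \<Lambda> i \<le> Max (?f ` ?J) + ereal e"
  proof (cases "Max (?f ` ?J)")
    case (real m)
    have "meets_all_flats UNIV K \<Lambda> i (m + e)"
    proof (rule meets_all_flats_if_covering_minima_sum_less[OF K assms(2) lattice_zero[OF assms(3)]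
        lattice_add[OF assms(3)] V])
      fix j assume "j \<le> dim V" "j \<le> i" "i - j \<le> DIM('a) - dim V"
      then have "?f j \<le> ereal m"
        using bound real assms(5) by auto
      also have "ereal m < ereal (m + e)"
        using \<open>0 < e\<close> by simp
      finally show "?f j < ereal (m + e)" .
    qed
    then have "covering_minimum UNIV K \<Lambda> i \<le> ereal (m + e)"
      using assms(6) \<open>0 \<le> Max (?f ` ?J)\<close> \<open>0 < e\<close> real by (intro covering_minimum_le) auto
    then show ?thesis using real by simp
  qed (use \<open>0 \<le> Max (?f ` ?J)\<close> in auto)
qed

end
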